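(* Let $d\in\mathbb{N}_+$, $T>0$, and let $f\colon\mathbb{R}^d\times[0,T]\to\mathbb{R}^d$ be continuous in $t$ with $\|f(x,t)-f(y,t)\|\le L\|x-y\|$ for all $x,y\in\mathbb{R}^d$, $t\in[0,T]$, for some $L>0$. Let $K\subseteq\mathbb{R}^d$ be compact and for $t\in[0,T]$ define $$K_t:=\Big\{x\in\mathbb{R}^d:\ \|x\|\le\sup_{z\in K}\Big(\|z\|+t+\int_0^t\|f(0,s)\|\,ds\Big)\exp(Lt)\Big\}.$$ Let $f_1\in\mathcal{C}(\mathbb{R}^d\times[0,T];\mathbb{R}^d)$ be locally Lipschitz in $x$ and satisfy $\|f_1-f\|_{L^\infty(K_T\times[0,T];\mathbb{R}^d)}\le1$, and let $\mathbf{y}$ be the solution of $\dot{\mathbf y}=f_1(\mathbf y,t)$, $\mathbf y(0)=z_0\in K$. Then $\mathbf y(t)\in K_t$ for every $t\in[0,T]$.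
   Context: $\|\cdot\|$ denotes the Euclidean norm on $\mathbb{R}^d$. *)

theory Defs
  imports "HOL-Analysis.Analysis"
begin

definition Kt :: "'a::euclidean_space set \<Rightarrow> ('a \<Rightarrow> real \<Rightarrow> 'a) \<Rightarrow> real \<Rightarrow> real \<Rightarrow> 'a set" where
  "Kt K f L t = {x. norm x \<le>
     (SUP z\<in>K. (norm z + t + integral {0..t} (\<lambda>s. norm (f 0 s))) * exp (L * t))}"

end

theory Submission
  imports Defs
begin

text \<open>While y stays in K_T, the closeness of f1 to the Lipschitz field f gives the linear growth
  bound |f1(x,t)| \<le> L |x| + |f(0,t)| + 1. A Gronwall argument, run on the differentiable
  substitute sqrt(|y|^2 + d^2) for the norm and letting d \<rightarrow> 0, then yields
  |y(t)| \<le> (|z0| + t + \<integral>_0^t |f(0,s)| ds) exp(L t), which is at most the radius of K_t.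
  The term t makes this radius strictly increasing, so the estimate keeps y strictly inside K_T
  before time T; a first-exit-time argument therefore shows that y never leaves K_T, and the
  estimate holds on all of [0, T].\<close>

lemma has_real_derivative_smoothed_norm:
  fixes y :: "real \<Rightarrow> 'a::real_inner"
  assumes y: "(y has_vector_derivative y') (at s within S)" and d: "d \<noteq> 0"
  shows "((\<lambda>s. sqrt (y s \<bullet> y s + d\<^sup>2)) has_real_derivative (y s \<bullet> y') / sqrt (y s \<bullet> y s + d\<^sup>2))
    (at s within S)"
proof -
  have pos: "0 < y s \<bullet> y s + d\<^sup>2"
    using d by (simp add: add_nonneg_pos)
  have "((\<lambda>s. y s \<bullet> y s + d\<^sup>2) has_real_derivative 2 * (y s \<bullet> y')) (at s within S)"
    using y unfolding has_vector_derivative_def has_field_derivative_def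
    by (auto intro!: derivative_eq_intros simp: inner_commute algebra_simps)
  from DERIV_chain2[OF DERIV_real_sqrt[OF pos] this] show ?thesis
    by (rule DERIV_cong) (simp add: field_simps)
qed

lemma norm_le_linear_growth_bound_plus:
  fixes y y' :: "real \<Rightarrow> 'a::real_inner" and b b' :: "real \<Rightarrow> real"
  assumes t: "0 \<le> t" and L: "0 \<le> L" and d: "0 < d"
    and y': "\<And>s. s \<in> {0..t} \<Longrightarrow> (y has_vector_derivative y' s) (at s within {0..t})"
    and b': "\<And>s. s \<in> {0..t} \<Longrightarrow> (b has_real_derivative b' s) (at s within {0..t})"
    and b'_nonneg: "\<And>s. s \<in> {0<..<t} \<Longrightarrow> 0 \<le> b' s"
    and growth: "\<And>s. s \<in> {0<..<t} \<Longrightarrow> norm (y' s) \<le> L * norm (y s) + b' s"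
  shows "norm (y t) \<le> (norm (y 0) + d + b t - b 0) * exp (L * t)"
proof -
  define p where "p s = sqrt (y s \<bullet> y s + d\<^sup>2)" for s
  define G where "G s = exp (- L * s) * p s - b s" for s
  have p_pos: "0 < p s" for s
    unfolding p_def using d by (simp add: add_nonneg_pos)
  have norm_le_p: "norm (y s) \<le> p s" for s
    unfolding p_def by (simp add: norm_eq_sqrt_inner)
  have "G t \<le> G 0"
  proof (rule DERIV_nonpos_imp_decreasing_open[OF t])
    fix s assume s: "0 < s" "s < t"
    then have at_s: "at s within {0..t} = at s"
      by (intro at_within_interior) auto
    have "(p has_real_derivative (y s \<bullet> y' s) / p s) (at s)"
      using has_real_derivative_smoothed_norm[OF y'[of s]] d s
      unfolding p_def at_s by simp
    then have G': "(G has_real_derivative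
        exp (- L * s) * ((y s \<bullet> y' s) / p s - L * p s) - b' s) (at s)"
      unfolding G_def using b'[of s] s unfolding at_s
      by (auto intro!: derivative_eq_intros simp: algebra_simps)
    have "y s \<bullet> y' s \<le> p s * norm (y' s)"
      using norm_cauchy_schwarz mult_right_mono[OF norm_le_p norm_ge_zero] by (rule order_trans)
    then have "(y s \<bullet> y' s) / p s \<le> norm (y' s)"
      using p_pos[of s] by (simp add: pos_divide_le_eq mult.commute)
    also have "\<dots> \<le> L * p s + b' s"
      using growth[of s] mult_left_mono[OF norm_le_p[of s] L] s by simp
    finally have "exp (- L * s) * ((y s \<bullet> y' s) / p s - L * p s) \<le> exp (- L * s) * b' s"
      by (simp add: mult_left_mono)
    also have "\<dots> \<le> b' s"
      using b'_nonneg[of s] s L by (simp add: mult_left_le_one_le)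
    finally show "\<exists>D. (G has_real_derivative D) (at s) \<and> D \<le> 0"
      using G' by force
  next
    have "continuous_on {0..t} y"
      using y' has_vector_derivative_continuous continuous_on_eq_continuous_within by blast
    moreover have "continuous_on {0..t} b"
      using b' by (rule DERIV_continuous_on)
    ultimately show "continuous_on {0..t} G"
      unfolding G_def p_def by (intro continuous_intros)
  qed
  also have "G 0 \<le> norm (y 0) + d - b 0"
    using sqrt_add_le_add_sqrt[of "y 0 \<bullet> y 0" "d\<^sup>2"] d
    unfolding G_def p_def by (simp add: norm_eq_sqrt_inner)
  finally have "exp (- L * t) * p t \<le> norm (y 0) + d + b t - b 0"
    unfolding G_def by simp
  then have "p t \<le> (norm (y 0) + d + b t - b 0) * exp (L * t)"
    by (simp add: exp_minus field_simps)
  with norm_le_p show ?thesis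
    by (rule order_trans)
qed

lemma norm_le_linear_growth_bound:
  fixes y y' :: "real \<Rightarrow> 'a::real_inner" and b b' :: "real \<Rightarrow> real"
  assumes t: "0 \<le> t" and L: "0 \<le> L"
    and y': "\<And>s. s \<in> {0..t} \<Longrightarrow> (y has_vector_derivative y' s) (at s within {0..t})"
    and b': "\<And>s. s \<in> {0..t} \<Longrightarrow> (b has_real_derivative b' s) (at s within {0..t})"
    and b'_nonneg: "\<And>s. s \<in> {0<..<t} \<Longrightarrow> 0 \<le> b' s"
    and growth: "\<And>s. s \<in> {0<..<t} \<Longrightarrow> norm (y' s) \<le> L * norm (y s) + b' s"
  shows "norm (y t) \<le> (norm (y 0) + b t - b 0) * exp (L * t)"
proof (rule field_le_epsilon)
  fix e :: real assume "0 < e"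
  then have "norm (y t) \<le> (norm (y 0) + e / exp (L * t) + b t - b 0) * exp (L * t)"
    by (intro norm_le_linear_growth_bound_plus[OF t L _ y' b' b'_nonneg growth]) auto
  then show "norm (y t) \<le> (norm (y 0) + b t - b 0) * exp (L * t) + e"
    by (simp add: algebra_simps)
qed

lemma first_time_ge:
  fixes g :: "real \<Rightarrow> real"
  assumes g: "continuous_on {a..t} g" and "a \<le> t" and "R \<le> g t"
  obtains \<tau> where "\<tau> \<in> {a..t}" "R \<le> g \<tau>" "\<And>s. s \<in> {a..<\<tau>} \<Longrightarrow> g s < R"
proof -
  define A where "A = {a..t} \<inter> g -` {R..}"
  have "t \<in> A"
    using assms unfolding A_def by auto
  moreover have "closed A"
    unfolding A_def using g by (intro continuous_closed_preimage) auto
  moreover have A_bdd: "bdd_below A"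
    unfolding A_def by (auto intro: bdd_belowI)
  ultimately have Inf_A: "Inf A \<in> A"
    using closed_contains_Inf by blast
  have "g s < R" if "s \<in> {a..<Inf A}" for s
  proof (rule ccontr)
    assume "\<not> g s < R"
    with that Inf_A have "s \<in> A"
      unfolding A_def by auto
    with that show False
      using cInf_lower[OF _ A_bdd] by force
  qed
  with Inf_A that show thesis
    unfolding A_def by auto
qed

lemma continuous_bootstrap_le:
  fixes g r :: "real \<Rightarrow> real"
  assumes g: "continuous_on {a..b} g"
    and bound: "\<And>t. t \<in> {a..b} \<Longrightarrow> \<forall>s\<in>{a<..<t}. g s \<le> R \<Longrightarrow> g t \<le> r t"
    and r_less: "\<And>t. t \<in> {a..<b} \<Longrightarrow> r t < R" and r_b: "r b \<le> R"
    and t: "t \<in> {a..b}"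
  shows "g t \<le> R"
proof (rule ccontr)
  assume g_t: "\<not> g t \<le> R"
  then obtain \<tau> where \<tau>: "\<tau> \<in> {a..t}" "R \<le> g \<tau>" "\<And>s. s \<in> {a..<\<tau>} \<Longrightarrow> g s < R"
    using first_time_ge[of a t g R] continuous_on_subset[OF g] t by auto
  have g_\<tau>: "g \<tau> \<le> r \<tau>"
    using t \<tau> by (intro bound) (auto intro!: less_imp_le \<tau>(3))
  show False
  proof (cases "\<tau> < b")
    case True
    with \<tau> g_\<tau> r_less[of \<tau>] show False by auto
  next
    case False
    with \<tau> t have "\<tau> = b" "t = b" by auto
    with g_\<tau> r_b g_t show False by auto
  qed
qed

lemma mem_KtI:
  assumes "bounded K" "z \<in> K"
    and "norm x \<le> (norm z + t + integral {0..t} (\<lambda>s. norm (f 0 s))) * exp (L * t)"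
  shows "x \<in> Kt K f L t"
proof -
  obtain B where B: "\<And>z. z \<in> K \<Longrightarrow> norm z \<le> B"
    using \<open>bounded K\<close> unfolding bounded_iff by blast
  have "bdd_above ((\<lambda>z. (norm z + t + integral {0..t} (\<lambda>s. norm (f 0 s))) * exp (L * t)) ` K)"
    by (rule bdd_aboveI2[where M = "(B + t + integral {0..t} (\<lambda>s. norm (f 0 s))) * exp (L * t)"])
      (simp add: B)
  with assms show ?thesis
    unfolding Kt_def by (auto intro: order_trans cSUP_upper)
qed

lemma norm_le_linear_growth_bound_in_ball:
  fixes y y' :: "real \<Rightarrow> 'a::real_inner" and b b' :: "real \<Rightarrow> real"
  assumes L: "0 \<le> L"
    and y': "\<And>s. s \<in> {0..T} \<Longrightarrow> (y has_vector_derivative y' s) (at s within {0..T})"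
    and b': "\<And>s. s \<in> {0..T} \<Longrightarrow> (b has_real_derivative b' s) (at s within {0..T})"
    and b'_pos: "\<And>s. s \<in> {0<..<T} \<Longrightarrow> 0 < b' s"
    and growth: "\<And>s. s \<in> {0<..<T} \<Longrightarrow> norm (y s) \<le> (norm (y 0) + b T - b 0) * exp (L * T) \<Longrightarrow>
      norm (y' s) \<le> L * norm (y s) + b' s"
    and t: "t \<in> {0..T}"
  shows "norm (y t) \<le> (norm (y 0) + b t - b 0) * exp (L * t)"
proof -
  define \<rho> where "\<rho> t = (norm (y 0) + b t - b 0) * exp (L * t)" for t
  have b_less: "b s < b t" if "0 \<le> s" "s < t" "t \<le> T" for s t
  proof (rule DERIV_pos_imp_increasing_open[OF \<open>s < t\<close>])
    fix x assume "s < x" "x < t"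
    with that have "at x within {0..T} = at x" "0 < b' x"
      by (auto intro!: at_within_interior b'_pos)
    with b'[of x] \<open>s < x\<close> \<open>x < t\<close> that show "\<exists>D. (b has_real_derivative D) (at x) \<and> 0 < D"
      by auto
  next
    show "continuous_on {s..t} b"
      using DERIV_continuous_on[OF b'] continuous_on_subset that by fastforce
  qed
  have \<rho>_less: "\<rho> s < \<rho> T" if "s \<in> {0..<T}" for s
  proof -
    have "0 \<le> b s - b 0"
      using that b_less[of 0 s] by (cases "s = 0") auto
    with that b_less[of s T] L show ?thesis
      unfolding \<rho>_def by (intro mult_less_le_imp_less) (auto intro: mult_left_mono add_increasing)
  qed
  have a_priori: "norm (y t) \<le> \<rho> t"
    if t: "t \<in> {0..T}" and inside: "\<forall>s\<in>{0<..<t}. norm (y s) \<le> \<rho> T" for t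
    unfolding \<rho>_def
  proof (rule norm_le_linear_growth_bound[OF _ L])
    fix s assume "s \<in> {0..t}"
    with t show "(y has_vector_derivative y' s) (at s within {0..t})"
      "(b has_real_derivative b' s) (at s within {0..t})"
      by (auto intro: has_vector_derivative_within_subset[OF y'] DERIV_subset[OF b'])
  next
    fix s assume s: "s \<in> {0<..<t}"
    with t show "0 \<le> b' s"
      using b'_pos[of s] by simp
    from s t inside show "norm (y' s) \<le> L * norm (y s) + b' s"
      by (intro growth) (auto simp: \<rho>_def)
  qed (use t in auto)
  have norm_y_cont: "continuous_on {0..T} (\<lambda>t. norm (y t))"
    using y' has_vector_derivative_continuous continuous_on_eq_continuous_within
    by (blast intro: continuous_on_norm)
  have "norm (y t) \<le> \<rho> t"
  proof (rule a_priori[OF t], intro ballI)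
    fix s assume "s \<in> {0<..<t}"
    with t have s: "s \<in> {0..T}"
      by auto
    show "norm (y s) \<le> \<rho> T"
      by (rule continuous_bootstrap_le[OF norm_y_cont a_priori \<rho>_less order_refl s])
  qed
  then show ?thesis
    unfolding \<rho>_def .
qed

theorem lemma3p2:
  fixes f f1 :: "'a::euclidean_space \<Rightarrow> real \<Rightarrow> 'a"
    and T L :: real and K :: "'a set" and z0 :: 'a and y :: "real \<Rightarrow> 'a"
  assumes T_pos: "T > 0"
    and f_cont_t: "\<And>x. continuous_on {0..T} (f x)"
    and L_pos: "L > 0"
    and f_lip: "\<And>x y t. t \<in> {0..T} \<Longrightarrow> norm (f x t - f y t) \<le> L * norm (x - y)"
    and K_compact: "compact K"
    and f1_cont: "continuous_on (UNIV \<times> {0..T}) (\<lambda>(x, t). f1 x t)"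
    and f1_loclip: "local_lipschitz {0..T} UNIV (\<lambda>t x. f1 x t)"
    and f1_close: "\<And>x t. x \<in> Kt K f L T \<Longrightarrow> t \<in> {0..T} \<Longrightarrow> norm (f1 x t - f x t) \<le> 1"
    and z0_in: "z0 \<in> K"
    and y_init: "y 0 = z0"
    and y_sol: "\<And>t. t \<in> {0..T} \<Longrightarrow> (y has_vector_derivative f1 (y t) t) (at t within {0..T})"
  shows "\<forall>t\<in>{0..T}. y t \<in> Kt K f L t"
proof -
  \<comment> \<open>T_pos, f1_cont and f1_loclip only make the initial value problem well posed.\<close>
  define c where "c s = norm (f 0 s)" for s
  define b where "b t = t + integral {0..t} c" for t
  have b_0: "b 0 = 0"
    unfolding b_def by simp
  have in_Kt: "x \<in> Kt K f L t" if "norm x \<le> (norm z0 + b t - b 0) * exp (L * t)" for x t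
    using that compact_imp_bounded[OF K_compact] z0_in
    unfolding b_0 b_def c_def by (intro mem_KtI) (auto simp: algebra_simps)
  have "norm (y t) \<le> (norm (y 0) + b t - b 0) * exp (L * t)" if t: "t \<in> {0..T}" for t
  proof (rule norm_le_linear_growth_bound_in_ball[OF _ y_sol _ _ _ t, where b' = "\<lambda>s. 1 + c s"])
    fix s assume "s \<in> {0..T}"
    then show "(b has_real_derivative 1 + c s) (at s within {0..T})"
      unfolding b_def c_def
      by (auto intro!: derivative_eq_intros integral_has_real_derivative continuous_intros f_cont_t)
  next
    fix s assume "s \<in> {0<..<T}"
      and "norm (y s) \<le> (norm (y 0) + b T - b 0) * exp (L * T)"
    then have s_T: "s \<in> {0..T}" and y_s: "y s \<in> Kt K f L T"
      using y_init by (auto intro: in_Kt)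
    have "norm (f1 (y s) s - f 0 s) \<le> 1 + L * norm (y s)"
      using norm_diff_triangle_le[OF f1_close[OF y_s s_T] f_lip[OF s_T, of "y s" 0]] by simp
    then show "norm (f1 (y s) s) \<le> L * norm (y s) + (1 + c s)"
      using norm_triangle_ineq2[of "f1 (y s) s" "f 0 s"] unfolding c_def by simp
  qed (use L_pos in \<open>auto simp: c_def intro: add_pos_nonneg\<close>)
  with y_init in_Kt show ?thesis
    by simp
qed

end
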